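(* Let $d\ge 1$, $A \in \mathbb{R}^{d+1}$ and $\Xi \in \mathbb{R}^{(d+1)\times d}$. Let $\Delta_d=\{\lambda\in\mathbb{R}^{d+1}:\lambda_i\ge 0,\sum_i\lambda_i=1\}$, integrate over $\Delta_d$ with respect to its $d$-dimensional Lebesgue (surface) measure, let $v(d)=\int_{\Delta_d}\mathrm{d}\lambda$, and let $\Sigma(d)$ be the covariance matrix of the uniform distribution on $\Delta_d$ (the Dirichlet$(1,\dots,1)$ distribution). Then $$\min_{\alpha_0\in\mathbb{R},\,\alpha\in\mathbb{R}^d}\ \int_{\Delta_d}\bigl(\alpha_0 - (A - \Xi\alpha)^\top\lambda\bigr)^2\,\mathrm{d}\lambda = v(d)\, A^\top\Bigl(\Sigma(d) - \Sigma(d)\,\Xi\,\bigl(\Xi^\top\Sigma(d)\,\Xi\bigr)^\dagger\,\Xi^\top\Sigma(d)\Bigr)A.$$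
   Context: $M^\dagger$ denotes the Moore–Penrose pseudoinverse of a matrix $M$. *)

theory Defs
  imports "HOL-Analysis.Analysis"
begin

text \<open>The vectors of R^(d+1) are indexed by the type 'm option (d = CARD('m));
  the coordinate None plays the role of the last barycentric coordinate.\<close>

definition simplex_dom :: "(real^'m::finite) set" where
  "simplex_dom = {x. (\<forall>i. 0 \<le> x$i) \<and> (\<Sum>i\<in>UNIV. x$i) \<le> 1}"

definition simplex_param :: "real^'m::finite \<Rightarrow> real^('m option)" where
  "simplex_param x = (\<chi> j. case j of None \<Rightarrow> 1 - (\<Sum>i\<in>UNIV. x$i) | Some i \<Rightarrow> x$i)"

text \<open>Integral over the standard simplex Delta_d in R^(d+1) w.r.t. d-dimensional surface
  (Hausdorff) measure: parametrize by the first d coordinates; the area factor of this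
  parametrization is sqrt(d+1).\<close>
definition simplex_integral :: "(real^('m::finite option) \<Rightarrow> real) \<Rightarrow> real" where
  "simplex_integral f =
     sqrt (real CARD('m option)) * integral (simplex_dom :: (real^'m) set) (\<lambda>x. f (simplex_param x))"

definition simplex_volume :: "'m::finite itself \<Rightarrow> real" where
  "simplex_volume _ = simplex_integral (\<lambda>_::real^('m option). 1)"

definition simplex_mean :: "'m::finite option \<Rightarrow> real" where
  "simplex_mean i = simplex_integral (\<lambda>l::real^('m option). l$i) / simplex_volume TYPE('m)"

definition simplex_cov :: "real^('m::finite option)^('m option)" where
  "simplex_cov = (\<chi> i j. simplex_integral (\<lambda>l::real^('m option). l$i * l$j) / simplex_volume TYPE('m)
                           - simplex_mean i * simplex_mean j)"

definition pinv :: "real^'b::finite^'a::finite \<Rightarrow> real^'a^'b" where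
  "pinv M = (THE X. M ** X ** M = M \<and> X ** M ** X = X \<and>
                    transpose (M ** X) = M ** X \<and> transpose (X ** M) = X ** M)"

end

theory Submission
  imports Defs
begin

text \<open>
  Write \<open>V\<close> for the volume of the simplex, \<open>\<mu>\<close> for the mean and \<open>\<Sigma>\<close> for the covariance of
  the uniform distribution on it. Expanding the square and integrating the first and second
  moments gives the bias--variance decomposition
  \<open>\<integral> (\<alpha>\<^sub>0 - w\<^sup>T\<lambda>)\<^sup>2 d\<lambda> = V (\<alpha>\<^sub>0 - w\<^sup>T\<mu>)\<^sup>2 + V w\<^sup>T\<Sigma>w\<close> with \<open>w = A - \<Xi>\<alpha>\<close>.
  The first term vanishes for \<open>\<alpha>\<^sub>0 = w\<^sup>T\<mu>\<close>, so it remains to minimise the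
  generalised least-squares form \<open>(A - \<Xi>\<alpha>)\<^sup>T\<Sigma>(A - \<Xi>\<alpha>)\<close> for the positive semidefinite
  \<open>\<Sigma>\<close>. With \<open>M = \<Xi>\<^sup>T\<Sigma>\<Xi>\<close> and \<open>b = \<Xi>\<^sup>T\<Sigma>A\<close>, the normal equations \<open>M\<alpha> = b\<close> are solved by
  \<open>\<alpha> = M\<^sup>\<dagger>b\<close>: the residual \<open>z = b - MM\<^sup>\<dagger>b\<close> is orthogonal to the range of \<open>M\<close>, hence
  \<open>\<Sigma>\<Xi>z = 0\<close> by semidefiniteness, hence \<open>|z|\<^sup>2 = z\<^sup>Tb = (\<Sigma>\<Xi>z)\<^sup>TA = 0\<close>. Completing the square
  then shows that this \<open>\<alpha>\<close> is optimal with value \<open>A\<^sup>T(\<Sigma> - \<Sigma>\<Xi>M\<^sup>\<dagger>\<Xi>\<^sup>T\<Sigma>)A\<close>.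
  The pseudoinverse of the symmetric matrix \<open>M\<close> is built from the orthogonal projection onto
  its range, on which \<open>M\<close> is injective.
\<close>

lemma inner_transpose_matrix_vector:
  "(transpose A *v x) \<bullet> y = x \<bullet> ((A::real^'n^'m) *v y)"
  by (simp add: dot_lmul_matrix)

lemma inner_matrix_vector_transpose:
  "((A::real^'n^'m) *v x) \<bullet> y = x \<bullet> (transpose A *v y)"
  by (metis inner_transpose_matrix_vector inner_commute)

lemma symmetric_matrix_inner:
  fixes A :: "real^'n^'n"
  assumes "transpose A = A"
  shows "(A *v x) \<bullet> y = x \<bullet> (A *v y)"
  using inner_matrix_vector_transpose[of A x y] assms by simp

lemma symmetric_matrixI:
  fixes A :: "real^'n^'n"
  assumes "\<And>x y. (A *v x) \<bullet> y = x \<bullet> (A *v y)"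
  shows "transpose A = A"
proof -
  have "transpose A *v x = A *v x" for x
    using assms inner_transpose_matrix_vector by (metis vector_eq_rdot)
  thus ?thesis by (simp add: matrix_eq)
qed

lemma orthogonal_projection_exists:
  fixes U :: "'a::euclidean_space set"
  assumes "subspace U"
  obtains p where "linear p" and "\<And>y. p y \<in> U" and "\<And>y u. u \<in> U \<Longrightarrow> (y - p y) \<bullet> u = 0"
proof -
  obtain B where "B \<subseteq> U" and orth: "pairwise orthogonal B" and unit: "\<And>b. b \<in> B \<Longrightarrow> norm b = 1"
      and "independent B" and spanB: "span B = U"
    using orthonormal_basis_subspace[OF assms] by metis
  define p where "p y = (\<Sum>b\<in>B. (b \<bullet> y) *\<^sub>R b)" for y
  have "finite B" using \<open>independent B\<close> independent_imp_finite by blast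
  have "linear p" unfolding p_def
    by (intro linearI) (auto simp: inner_add_right scaleR_add_left sum.distrib scaleR_sum_right)
  moreover have "p y \<in> U" for y
    unfolding p_def spanB[symmetric] by (intro span_sum span_mul span_base)
  moreover have "(y - p y) \<bullet> u = 0" if "u \<in> U" for y u
  proof -
    have "(y - p y) \<bullet> c = 0" if c: "c \<in> B" for c
    proof -
      have "p y \<bullet> c = (\<Sum>b\<in>B. (b \<bullet> y) * (b \<bullet> c))"
        unfolding p_def by (simp add: inner_sum_left)
      also have "\<dots> = (c \<bullet> y) * (c \<bullet> c) + (\<Sum>b\<in>B-{c}. (b \<bullet> y) * (b \<bullet> c))"
        using \<open>finite B\<close> c by (simp add: sum.remove)
      also have "(\<Sum>b\<in>B-{c}. (b \<bullet> y) * (b \<bullet> c)) = 0"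
        using orth c by (intro sum.neutral) (auto simp: pairwise_def orthogonal_def)
      finally show ?thesis
        using unit[OF c] by (simp add: norm_eq_1 inner_diff_left inner_diff_right inner_commute)
    qed
    then show ?thesis
      using orthogonal_to_span[of u B "y - p y"] that spanB unfolding orthogonal_def by blast
  qed
  ultimately show thesis by (rule that)
qed

lemma orthogonal_projection_id:
  assumes "subspace U" and "\<And>y. p y \<in> U" and "\<And>y u. u \<in> U \<Longrightarrow> (y - p y) \<bullet> u = 0"
    and "u \<in> U"
  shows "p u = u"
proof -
  have "u - p u \<in> U" using assms by (simp add: subspace_diff)
  then show ?thesis using assms(3)[of "u - p u" u] by simp
qed

lemma orthogonal_projection_self_adjoint:
  assumes "\<And>y. p y \<in> U" and "\<And>y u. u \<in> U \<Longrightarrow> (y - p y) \<bullet> u = 0"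
  shows "p y \<bullet> z = y \<bullet> p z"
proof -
  have "p y \<bullet> z = p y \<bullet> p z"
    using assms(2)[of "p y" z] assms(1) by (metis eq_iff_diff_eq_0 inner_commute inner_diff_left)
  also have "\<dots> = y \<bullet> p z"
    using assms(2)[of "p z" y] assms(1) by (simp add: inner_diff_left)
  finally show ?thesis .
qed

lemma symmetric_matrix_vector_eq_0_if_orthogonal_range:
  fixes M :: "real^'n^'n"
  assumes "transpose M = M" and "\<And>x. y \<bullet> (M *v x) = 0"
  shows "M *v y = 0"
proof -
  have "(M *v y) \<bullet> (M *v y) = y \<bullet> (M *v (M *v y))"
    using symmetric_matrix_inner[OF assms(1)] by blast
  also have "\<dots> = 0" using assms(2) by blast
  finally show ?thesis by simp
qed

lemma symmetric_matrix_inj_on_range: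
  fixes M :: "real^'n^'n"
  assumes "transpose M = M"
  shows "inj_on ((*v) M) (range ((*v) M))"
proof (rule inj_onI)
  fix x y assume "x \<in> range ((*v) M)" "y \<in> range ((*v) M)" and eq: "M *v x = M *v y"
  then obtain v where v: "x - y = M *v v"
    by (metis (no_types, lifting) imageE matrix_vector_mult_diff_distrib)
  have "(x - y) \<bullet> (x - y) = v \<bullet> (M *v (x - y))"
    using v symmetric_matrix_inner[OF assms] by metis
  also have "\<dots> = 0" using eq by (simp add: matrix_vector_mult_diff_distrib)
  finally show "x = y" by simp
qed

lemma symmetric_matrix_left_inverse_on_range:
  fixes M :: "real^'n^'n"
  assumes "transpose M = M"
  obtains g where "linear g" and "\<And>y. g y \<in> range ((*v) M)"
    and "\<And>u. u \<in> range ((*v) M) \<Longrightarrow> g (M *v u) = u"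
proof -
  have span_eq: "span (range ((*v) M)) = range ((*v) M)"
    by (simp add: linear_subspace_image)
  have "inj_on ((*v) M) (span (range ((*v) M)))"
    unfolding span_eq by (rule symmetric_matrix_inj_on_range[OF assms])
  from linear_inj_on_left_inverse[OF matrix_vector_mul_linear this] show thesis
    using that unfolding span_eq by blast
qed

definition is_pinv :: "real^'b::finite^'a::finite \<Rightarrow> real^'a^'b \<Rightarrow> bool" where
  "is_pinv M X \<longleftrightarrow> M ** X ** M = M \<and> X ** M ** X = X \<and>
     transpose (M ** X) = M ** X \<and> transpose (X ** M) = X ** M"

lemma is_pinv_unique:
  assumes "is_pinv M X1" and "is_pinv M X2"
  shows "X1 = X2"
proof -
  have a1: "M ** X1 ** M = M" and b1: "X1 ** M ** X1 = X1"
    and c1: "transpose (M ** X1) = M ** X1" and d1: "transpose (X1 ** M) = X1 ** M"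
    and a2: "M ** X2 ** M = M" and b2: "X2 ** M ** X2 = X2"
    and c2: "transpose (M ** X2) = M ** X2" and d2: "transpose (X2 ** M) = X2 ** M"
    using assms unfolding is_pinv_def by auto
  have "transpose M = transpose M ** (M ** X2)"
    using a2 c2 by (metis matrix_transpose_mul)
  then have "X1 = X1 ** transpose (M ** X1) ** (M ** X2)"
    using b1 c1 by (metis matrix_transpose_mul matrix_mul_assoc)
  also have "\<dots> = X1 ** M ** X2"
    using c1 b1 by (metis matrix_mul_assoc)
  finally have left: "X1 = X1 ** M ** X2" .
  have "transpose M = (X1 ** M) ** transpose M"
    using a1 d1 by (metis matrix_transpose_mul matrix_mul_assoc)
  then have "X2 = (X1 ** M) ** transpose (X2 ** M) ** X2"
    using b2 d2 by (metis matrix_transpose_mul matrix_mul_assoc)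
  also have "\<dots> = X1 ** M ** X2"
    using d2 b2 by (metis matrix_mul_assoc)
  finally show ?thesis using left by simp
qed

lemma is_pinv_pinv:
  assumes "is_pinv M X"
  shows "is_pinv M (pinv M)"
proof -
  have "\<exists>!X. is_pinv M X" using assms is_pinv_unique by blast
  then show ?thesis unfolding pinv_def is_pinv_def[symmetric] by (rule theI')
qed

lemma symmetric_matrix_has_pinv:
  fixes M :: "real^'n^'n"
  assumes sym: "transpose M = M"
  shows "\<exists>G. is_pinv M G"
proof -
  define U where "U = range ((*v) M)"
  have "subspace U" unfolding U_def by (simp add: linear_subspace_image)
  then obtain p where "linear p" and pU: "\<And>y. p y \<in> U" and orth: "\<And>y u. u \<in> U \<Longrightarrow> (y - p y) \<bullet> u = 0"
    using orthogonal_projection_exists by blast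
  have p_id: "p u = u" if "u \<in> U" for u
    using orthogonal_projection_id[OF \<open>subspace U\<close> pU orth that] .
  have p_sym: "p y \<bullet> z = y \<bullet> p z" for y z
    using orthogonal_projection_self_adjoint[OF pU orth] .
  have Mp: "M *v p x = M *v x" for x
    using symmetric_matrix_vector_eq_0_if_orthogonal_range[OF sym, of "x - p x"] orth[of _ x]
    by (simp add: U_def matrix_vector_mult_diff_distrib)
  obtain g where "linear g" and gU: "\<And>y. g y \<in> U" and g_inv: "\<And>u. u \<in> U \<Longrightarrow> g (M *v u) = u"
    unfolding U_def using symmetric_matrix_left_inverse_on_range[OF sym] by blast
  define G where "G = matrix (g \<circ> p)"
  have Gv: "G *v y = g (p y)" for y
    unfolding G_def using matrix_vector_mul(2)[OF linear_compose[OF \<open>linear p\<close> \<open>linear g\<close>]] by simp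
  have GM: "G *v (M *v x) = p x" for x
  proof -
    have "G *v (M *v x) = g (M *v p x)" by (simp add: Gv p_id U_def Mp)
    also have "\<dots> = p x" by (rule g_inv[OF pU])
    finally show ?thesis .
  qed
  have MG: "M *v (G *v y) = p y" for y
  proof -
    obtain v where v: "p y = M *v v" using pU[of y] by (auto simp: U_def)
    have "M *v (G *v y) = M *v g (M *v p v)" by (simp add: Gv v Mp)
    also have "\<dots> = M *v p v" by (simp only: g_inv[OF pU])
    also have "\<dots> = p y" by (simp add: Mp v)
    finally show ?thesis .
  qed
  have "M ** G ** M = M"
    by (simp add: matrix_eq GM Mp flip: matrix_vector_mul_assoc)
  moreover have "G ** M ** G = G"
    by (simp add: matrix_eq GM flip: matrix_vector_mul_assoc) (simp add: Gv p_id gU)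
  moreover have "transpose (M ** G) = M ** G" "transpose (G ** M) = G ** M"
    by (rule symmetric_matrixI, simp add: MG GM p_sym flip: matrix_vector_mul_assoc)+
  ultimately show ?thesis unfolding is_pinv_def by blast
qed

lemma psd_matrix_vector_eq_0:
  fixes S :: "real^'n^'n"
  assumes sym: "transpose S = S" and psd: "\<And>w. 0 \<le> w \<bullet> (S *v w)" and "x \<bullet> (S *v x) = 0"
  shows "S *v x = 0"
proof -
  define y where "y = S *v x"
  define n where "n = y \<bullet> y"
  define c where "c = y \<bullet> (S *v y)"
  have "c \<ge> 0" using psd c_def by simp
  have "x \<bullet> (S *v y) = n"
    using symmetric_matrix_inner[OF sym, of x y] by (simp add: n_def y_def inner_commute)
  then have along_y: "0 \<le> t^2 * c - 2 * t * n" for t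
    using psd[of "x - t *\<^sub>R y"] \<open>x \<bullet> (S *v x) = 0\<close>
    by (simp add: algebra_simps power2_eq_square c_def n_def y_def)
  have "0 \<le> (n / (c + 1))^2 * c - 2 * (n / (c + 1)) * n" by (rule along_y)
  also have "\<dots> = - (n^2 * (c + 2) / (c + 1)^2)"
    using \<open>c \<ge> 0\<close> by (simp add: divide_simps power2_eq_square) (simp add: algebra_simps)
  finally have "n = 0"
    using \<open>c \<ge> 0\<close> by (simp add: divide_le_0_iff mult_le_0_iff)
  then show ?thesis by (simp add: n_def y_def)
qed

lemma inner_congruence_matrix_vector:
  fixes S :: "real^'n^'n" and X :: "real^'m^'n"
  shows "v \<bullet> ((transpose X ** S ** X) *v u) = (X *v v) \<bullet> (S *v (X *v u))"
  by (simp add: inner_matrix_vector_transpose flip: matrix_vector_mul_assoc)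

lemma gls_normal_equation:
  fixes S :: "real^'n^'n" and X :: "real^'m^'n" and P :: "real^'m^'m"
  assumes sym: "transpose S = S" and psd: "\<And>w. 0 \<le> w \<bullet> (S *v w)"
  defines "M \<equiv> transpose X ** S ** X"
  assumes MPM: "M ** P ** M = M" and MP_sym: "transpose (M ** P) = M ** P"
  shows "M *v (P *v (transpose X *v (S *v A))) = transpose X *v (S *v A)"
proof -
  define b where "b = transpose X *v (S *v A)"
  define z where "z = b - M *v (P *v b)"
  have M_form: "v \<bullet> (M *v u) = (X *v v) \<bullet> (S *v (X *v u))" for u v
    unfolding M_def by (rule inner_congruence_matrix_vector)
  have z_orth: "z \<bullet> (M *v v) = 0" for v
  proof -
    have "(M *v (P *v b)) \<bullet> (M *v v) = b \<bullet> (M *v (P *v (M *v v)))"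
      using symmetric_matrix_inner[OF MP_sym] by (simp add: matrix_vector_mul_assoc matrix_mul_assoc)
    also have "\<dots> = b \<bullet> (M *v v)"
      using MPM by (simp add: matrix_vector_mul_assoc matrix_mul_assoc)
    finally show ?thesis by (simp add: z_def inner_diff_left)
  qed
  have "S *v (X *v z) = 0"
    using z_orth[of z] by (intro psd_matrix_vector_eq_0[OF sym psd]) (simp add: M_form)
  then have "(X *v z) \<bullet> (S *v A) = 0"
    by (metis inner_zero_left symmetric_matrix_inner[OF sym])
  then have "z \<bullet> b = 0"
    by (simp add: b_def inner_matrix_vector_transpose)
  moreover have "z \<bullet> z = z \<bullet> b"
    using z_orth[of "P *v b"] by (simp add: z_def inner_diff_right)
  ultimately show ?thesis by (simp add: z_def b_def)
qed

lemma gls_minimum: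
  fixes S :: "real^'n^'n" and X :: "real^'m^'n" and P :: "real^'m^'m" and A :: "real^'n"
  assumes sym: "transpose S = S" and psd: "\<And>w. 0 \<le> w \<bullet> (S *v w)"
  defines "M \<equiv> transpose X ** S ** X"
  assumes MPM: "M ** P ** M = M" and MP_sym: "transpose (M ** P) = M ** P"
  defines "q \<equiv> (\<lambda>a. (A - X *v a) \<bullet> (S *v (A - X *v a)))"
  defines "c \<equiv> P *v (transpose X *v (S *v A))"
  shows "q c = A \<bullet> ((S - S ** X ** P ** transpose X ** S) *v A)" and "q c \<le> q a"
proof -
  define b where "b = transpose X *v (S *v A)"
  have M_form: "v \<bullet> (M *v u) = (X *v v) \<bullet> (S *v (X *v u))" for u v
    unfolding M_def by (rule inner_congruence_matrix_vector)
  have "transpose M = M"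
    using sym by (simp add: M_def matrix_transpose_mul matrix_mul_assoc)
  have normal: "M *v c = b"
    using gls_normal_equation[OF sym psd MPM[unfolded M_def] MP_sym[unfolded M_def]]
    by (simp add: M_def b_def c_def)
  have q_expand: "q a = A \<bullet> (S *v A) - 2 * (a \<bullet> b) + a \<bullet> (M *v a)" for a
  proof -
    have "(X *v a) \<bullet> (S *v A) = a \<bullet> b"
      by (simp add: b_def inner_matrix_vector_transpose)
    moreover have "A \<bullet> (S *v (X *v a)) = (X *v a) \<bullet> (S *v A)"
      using symmetric_matrix_inner[OF sym] by (metis inner_commute)
    ultimately show ?thesis
      by (simp add: q_def M_form matrix_vector_mult_diff_distrib inner_diff_left inner_diff_right)
  qed
  have "q a - q c = (a - c) \<bullet> (M *v (a - c))"
    using symmetric_matrix_inner[OF \<open>transpose M = M\<close>, of c a]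
    by (simp add: q_expand normal[symmetric] matrix_vector_mult_diff_distrib inner_diff_left
        inner_diff_right inner_commute)
  then show "q c \<le> q a"
    using psd[of "X *v (a - c)"] by (simp add: M_form)
  have "A \<bullet> ((S ** X ** P ** transpose X ** S) *v A) = b \<bullet> c"
    using inner_transpose_matrix_vector[of "S ** X" A c]
    by (simp add: b_def c_def matrix_vector_mul_assoc matrix_mul_assoc matrix_transpose_mul sym)
  then show "q c = A \<bullet> ((S - S ** X ** P ** transpose X ** S) *v A)"
    by (simp add: q_expand normal matrix_vector_mult_diff_rdistrib inner_diff_right inner_commute)
qed

lemma continuous_on_simplex_param: "continuous_on S (simplex_param :: real^'m::finite \<Rightarrow> _)"
proof -
  have "continuous_on S (\<lambda>x::real^'m. case j of None \<Rightarrow> 1 - (\<Sum>i\<in>UNIV. x$i) | Some i \<Rightarrow> x$i)"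
    for j :: "'m option"
    by (cases j) (auto intro!: continuous_on_diff continuous_on_sum continuous_on_component)
  then show ?thesis unfolding simplex_param_def by (intro continuous_on_vec_lambda)
qed

lemma compact_simplex_dom: "compact (simplex_dom :: (real^'m::finite) set)"
proof -
  have "simplex_dom = {x::real^'m. \<forall>i. 0 \<le> x$i} \<inter> {x. (\<Sum>i\<in>UNIV. x$i) \<le> 1}"
    unfolding simplex_dom_def by auto
  moreover have "closed {x::real^'m. (\<Sum>i\<in>UNIV. x$i) \<le> 1}"
    by (intro closed_Collect_le continuous_intros)
  ultimately have "closed (simplex_dom :: (real^'m) set)"
    using closed_positive_orthant by (metis closed_Int)
  moreover have "simplex_dom \<subseteq> cbox (0::real^'m) 1"
  proof
    fix x :: "real^'m" assume x: "x \<in> simplex_dom"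
    then have "x$i \<le> 1" for i
      using member_le_sum[of i UNIV "\<lambda>j. x$j"] unfolding simplex_dom_def by fastforce
    then show "x \<in> cbox 0 1" using x unfolding simplex_dom_def by (simp add: mem_box_cart)
  qed
  ultimately show ?thesis
    using bounded_cbox bounded_subset compact_eq_bounded_closed by blast
qed

lemma integrable_continuous_compact:
  fixes f :: "'a::euclidean_space \<Rightarrow> 'b::euclidean_space"
  assumes "compact S" and "continuous_on S f"
  shows "f integrable_on S"
proof -
  have "(\<lambda>x. indicator S x *\<^sub>R f x) integrable_on UNIV"
    using borel_integrable_compact[OF assms] by (rule integrable_on_lborel)
  then show ?thesis
    by (simp add: indicator_scaleR_eq_if integrable_restrict_UNIV)
qed

lemma simplex_integrable:
  fixes f :: "real^('m::finite option) \<Rightarrow> real"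
  assumes "continuous_on UNIV f"
  shows "(\<lambda>x. f (simplex_param x)) integrable_on (simplex_dom :: (real^'m) set)"
  using assms
  by (intro integrable_continuous_compact compact_simplex_dom
      continuous_on_compose2[OF _ continuous_on_simplex_param]) auto

lemma simplex_integral_add:
  fixes f g :: "real^('m::finite option) \<Rightarrow> real"
  assumes "continuous_on UNIV f" and "continuous_on UNIV g"
  shows "simplex_integral (\<lambda>l. f l + g l) = simplex_integral f + simplex_integral g"
  unfolding simplex_integral_def
  by (simp add: integral_add simplex_integrable assms distrib_left)

lemma simplex_integral_diff:
  fixes f g :: "real^('m::finite option) \<Rightarrow> real"
  assumes "continuous_on UNIV f" and "continuous_on UNIV g"
  shows "simplex_integral (\<lambda>l. f l - g l) = simplex_integral f - simplex_integral g"
  unfolding simplex_integral_def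
  by (simp add: integral_diff simplex_integrable assms right_diff_distrib)

lemma simplex_integral_sum:
  fixes f :: "'i \<Rightarrow> real^('m::finite option) \<Rightarrow> real"
  assumes "finite I" and "\<And>i. i \<in> I \<Longrightarrow> continuous_on UNIV (f i)"
  shows "simplex_integral (\<lambda>l. \<Sum>i\<in>I. f i l) = (\<Sum>i\<in>I. simplex_integral (f i))"
  unfolding simplex_integral_def
  by (simp add: integral_sum simplex_integrable assms sum_distrib_left)

lemma simplex_integral_mult_left:
  "simplex_integral (\<lambda>l::real^('m::finite option). c * f l) = c * simplex_integral f"
  by (simp add: simplex_integral_def)

lemma simplex_integral_const:
  "simplex_integral (\<lambda>_::real^('m::finite option). c) = c * simplex_volume TYPE('m)"
  using simplex_integral_mult_left[of c "\<lambda>_. 1"] by (simp add: simplex_volume_def)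

lemma simplex_volume_pos: "simplex_volume TYPE('m::finite) > 0"
proof -
  define b :: "real^'m" where "b = (\<chi> i. 1 / real CARD('m))"
  have "cbox 0 b \<subseteq> simplex_dom"
  proof
    fix x assume "x \<in> cbox 0 b"
    then have x: "0 \<le> x$i \<and> x$i \<le> 1 / real CARD('m)" for i
      by (simp add: mem_box_cart b_def)
    have "(\<Sum>i\<in>UNIV. x$i) \<le> (\<Sum>i\<in>(UNIV::'m set). 1 / real CARD('m))"
      using x by (intro sum_mono) auto
    then show "x \<in> simplex_dom" using x by (simp add: simplex_dom_def)
  qed
  have "0 < integral (cbox 0 b) (\<lambda>_::real^'m. 1::real)"
    using content_pos_lt[of 0 b] by (simp add: Basis_vec_def b_def inner_axis)
  also have "\<dots> \<le> integral simplex_dom (\<lambda>_::real^'m. 1::real)"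
    using \<open>cbox 0 b \<subseteq> simplex_dom\<close> simplex_integrable[of "\<lambda>_. 1"]
    by (intro integral_subset_le) (auto simp: integrable_const_ivl)
  finally show ?thesis by (simp add: simplex_volume_def simplex_integral_def)
qed

lemma simplex_integral_component:
  "simplex_integral (\<lambda>l::real^('m::finite option). l$i) = simplex_volume TYPE('m) * simplex_mean i"
  using simplex_volume_pos[where 'm='m] by (simp add: simplex_mean_def)

lemma simplex_integral_component_mult:
  "simplex_integral (\<lambda>l::real^('m::finite option). l$i * l$j) =
     simplex_volume TYPE('m) * (simplex_cov $ i $ j + simplex_mean i * simplex_mean j)"
  using simplex_volume_pos[where 'm='m] by (simp add: simplex_cov_def field_simps)

lemma simplex_integral_inner:
  fixes w :: "real^('m::finite option)"
  shows "simplex_integral (\<lambda>l. w \<bullet> l) = simplex_volume TYPE('m) * (w \<bullet> (\<chi> i. simplex_mean i))"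
proof -
  have "simplex_integral (\<lambda>l. w \<bullet> l) = (\<Sum>i\<in>UNIV. simplex_integral (\<lambda>l. w$i * l$i))"
    unfolding inner_vec_def inner_real_def by (intro simplex_integral_sum continuous_intros) simp
  also have "\<dots> = (\<Sum>i\<in>UNIV. w$i * (simplex_volume TYPE('m) * simplex_mean i))"
    by (simp only: simplex_integral_mult_left simplex_integral_component)
  finally show ?thesis
    by (simp add: inner_vec_def sum_distrib_left mult_ac)
qed

lemma simplex_integral_inner_square:
  fixes w :: "real^('m::finite option)"
  shows "simplex_integral (\<lambda>l. (w \<bullet> l)^2) =
    simplex_volume TYPE('m) * (w \<bullet> (simplex_cov *v w) + (w \<bullet> (\<chi> i. simplex_mean i))^2)"
proof -
  have "(\<lambda>l. (w \<bullet> l)^2) = (\<lambda>l. \<Sum>i\<in>UNIV. \<Sum>j\<in>UNIV. (w$i * w$j) * (l$i * l$j))"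
    by (simp add: fun_eq_iff inner_vec_def power2_eq_square sum_product mult_ac)
  then have "simplex_integral (\<lambda>l. (w \<bullet> l)^2) =
      (\<Sum>i\<in>UNIV. simplex_integral (\<lambda>l. \<Sum>j\<in>UNIV. (w$i * w$j) * (l$i * l$j)))"
    by (simp only:) (intro simplex_integral_sum continuous_intros, simp)
  also have "\<dots> = (\<Sum>i\<in>UNIV. \<Sum>j\<in>UNIV. simplex_integral (\<lambda>l. (w$i * w$j) * (l$i * l$j)))"
    by (intro sum.cong refl simplex_integral_sum continuous_intros) simp
  also have "\<dots> = (\<Sum>i\<in>UNIV. \<Sum>j\<in>UNIV. (w$i * w$j) *
      (simplex_volume TYPE('m) * (simplex_cov $ i $ j + simplex_mean i * simplex_mean j)))"
    by (simp only: simplex_integral_mult_left simplex_integral_component_mult)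
  finally show ?thesis
    by (simp add: inner_vec_def matrix_vector_mult_def power2_eq_square sum_product sum_distrib_left
        distrib_left sum.distrib mult_ac)
qed

lemma simplex_integral_affine_square:
  fixes w :: "real^('m::finite option)"
  shows "simplex_integral (\<lambda>l. (c - w \<bullet> l)^2) =
    simplex_volume TYPE('m) * (c - w \<bullet> (\<chi> i. simplex_mean i))^2 +
    simplex_volume TYPE('m) * (w \<bullet> (simplex_cov *v w))"
proof -
  have "simplex_integral (\<lambda>l. (c - w \<bullet> l)^2) =
      simplex_integral (\<lambda>l. (c^2 - 2 * c * (w \<bullet> l)) + (w \<bullet> l)^2)"
    by (intro arg_cong[where f = simplex_integral] ext) (simp add: power2_diff)
  also have "\<dots> = simplex_integral (\<lambda>l. c^2 - 2 * c * (w \<bullet> l)) + simplex_integral (\<lambda>l. (w \<bullet> l)^2)"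
    by (intro simplex_integral_add continuous_intros)
  also have "simplex_integral (\<lambda>l. c^2 - 2 * c * (w \<bullet> l)) =
      c^2 * simplex_volume TYPE('m) - 2 * c * simplex_integral (\<lambda>l. w \<bullet> l)"
    by (subst simplex_integral_diff, (intro continuous_intros)+)
      (simp add: simplex_integral_const simplex_integral_mult_left)
  finally show ?thesis
    by (simp add: simplex_integral_inner simplex_integral_inner_square power2_diff algebra_simps)
qed

lemma simplex_cov_symmetric: "transpose (simplex_cov :: real^('m::finite option)^('m option)) = simplex_cov"
  unfolding simplex_cov_def transpose_def by (simp add: vec_eq_iff mult.commute)

lemma simplex_cov_psd: "0 \<le> w \<bullet> ((simplex_cov :: real^('m::finite option)^('m option)) *v w)"
proof -
  define c where "c = w \<bullet> (\<chi> i. simplex_mean i)"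
  have "(\<lambda>x. (c - w \<bullet> simplex_param x)^2) integrable_on (simplex_dom :: (real^'m) set)"
    by (rule simplex_integrable[where f = "\<lambda>l. (c - w \<bullet> l)^2"]) (intro continuous_intros)
  then have "0 \<le> simplex_integral (\<lambda>l::real^('m option). (c - w \<bullet> l)^2)"
    unfolding simplex_integral_def by (simp add: integral_nonneg)
  then show ?thesis
    using simplex_volume_pos[where 'm='m] by (simp add: simplex_integral_affine_square c_def zero_le_mult_iff)
qed

theorem lemma8:
  fixes A :: "real^('m::finite option)" and Xi :: "real^'m^('m option)"
  defines "J \<equiv> (\<lambda>(a0::real) (a::real^'m).
             simplex_integral (\<lambda>l. (a0 - (A - Xi *v a) \<bullet> l)^2))"
      and "S \<equiv> (simplex_cov :: real^('m option)^('m option))"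
  defines "R \<equiv> simplex_volume TYPE('m) *
             (A \<bullet> ((S - S ** Xi ** pinv (transpose Xi ** S ** Xi) ** transpose Xi ** S) *v A))"
  shows "(\<exists>a0 a. J a0 a = R) \<and> (\<forall>a0 a. R \<le> J a0 a)"
proof -
  define V where "V = simplex_volume TYPE('m)"
  define M where "M = transpose Xi ** S ** Xi"
  define \<mu> :: "real^('m option)" where "\<mu> = (\<chi> i. simplex_mean i)"
  define q where "q a = (A - Xi *v a) \<bullet> (S *v (A - Xi *v a))" for a
  define a_opt where "a_opt = pinv M *v (transpose Xi *v (S *v A))"
  have sym: "transpose S = S" and psd: "\<And>w. 0 \<le> w \<bullet> (S *v w)"
    unfolding S_def by (rule simplex_cov_symmetric, rule simplex_cov_psd)
  have "transpose M = M"
    using sym by (simp add: M_def matrix_transpose_mul matrix_mul_assoc)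
  then have "is_pinv M (pinv M)"
    using symmetric_matrix_has_pinv is_pinv_pinv by blast
  then have "M ** pinv M ** M = M" and "transpose (M ** pinv M) = M ** pinv M"
    unfolding is_pinv_def by auto
  note gls = gls_minimum[OF sym psd this[unfolded M_def], of A]
  have R: "R = V * q a_opt"
    using gls(1) unfolding R_def V_def q_def a_opt_def M_def by simp
  have q_min: "q a_opt \<le> q a" for a
    using gls(2) unfolding q_def a_opt_def M_def .
  have J: "J a0 a = V * (a0 - (A - Xi *v a) \<bullet> \<mu>)^2 + V * q a" for a0 a
    unfolding J_def V_def q_def \<mu>_def S_def by (rule simplex_integral_affine_square)
  have "V > 0" unfolding V_def by (rule simplex_volume_pos)
  have "J ((A - Xi *v a_opt) \<bullet> \<mu>) a_opt = R"
    using J R by simp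
  moreover have "R \<le> J a0 a" for a0 a
    using J[of a0 a] R q_min[of a] \<open>V > 0\<close> by (simp add: add_increasing)
  ultimately show ?thesis by blast
qed

end
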